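(* Let $\Phi$ be a Følner sequence in $\mathbb{N}$ and let $j\mapsto f_j$ be a sequence in $L^2(\mathbb{N},\Phi)$ that is Cauchy with respect to $\|\cdot\|_\Phi$. Then there exist a subsequence $\Psi$ of $\Phi$ and $f\in L^2(\mathbb{N},\Psi)$ such that $\|f-f_j\|_\Psi\to0$ as $j\to\infty$. Moreover, if all the $f_j$ take values in an interval $[a,b]$, then so does $f$.
   Context: A Følner sequence in $\mathbb{N}$ is a sequence $\Phi\colon N\mapsto\Phi_N$ of finite non-empty subsets of $\mathbb{N}$ with $|(\Phi_N+m)\triangle\Phi_N|/|\Phi_N|\to0$ for all $m\in\mathbb{N}$. The Besicovitch seminorm is $\|f\|_\Phi=\big(\limsup_{N\to\infty}\frac{1}{|\Phi_N|}\sum_{n\in\Phi_N}|f(n)|^2\big)^{1/2}$ and $L^2(\mathbb{N},\Phi)=\{f\colon\mathbb{N}\to\mathbb{C}:\|f\|_\Phi<\infty\}$. A sequence $(f_j)$ is Cauchy with respect to $\|\cdot\|_\Phi$ if for every $\epsilon>0$ there is $N$ with $\|f_k-f_j\|_\Phi\le\epsilon$ for all $j,k\ge N$. *)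

theory Defs
  imports "HOL-Analysis.Analysis" "HOL-Library.Liminf_Limsup"
begin

definition folner :: "(nat \<Rightarrow> nat set) \<Rightarrow> bool" where
  "folner \<Phi> \<longleftrightarrow> (\<forall>N. finite (\<Phi> N) \<and> \<Phi> N \<noteq> {}) \<and>
     (\<forall>m::nat. (\<lambda>N. real (card ((((\<lambda>n. n + m) ` \<Phi> N) - \<Phi> N) \<union> (\<Phi> N - ((\<lambda>n. n + m) ` \<Phi> N))))
                    / real (card (\<Phi> N))) \<longlonglongrightarrow> 0)"

definition besic_sq :: "(nat \<Rightarrow> nat set) \<Rightarrow> (nat \<Rightarrow> complex) \<Rightarrow> ereal" where
  "besic_sq \<Phi> f = limsup (\<lambda>N. ereal ((\<Sum>n\<in>\<Phi> N. (cmod (f n))\<^sup>2) / real (card (\<Phi> N))))"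

definition L2 :: "(nat \<Rightarrow> nat set) \<Rightarrow> (nat \<Rightarrow> complex) set" where
  "L2 \<Phi> = {f. besic_sq \<Phi> f < \<infinity>}"

text \<open>Besicovitch seminorm; only used for functions in L2, where the limsup is finite.\<close>
definition besic_norm :: "(nat \<Rightarrow> nat set) \<Rightarrow> (nat \<Rightarrow> complex) \<Rightarrow> real" where
  "besic_norm \<Phi> f = sqrt (real_of_ereal (besic_sq \<Phi> f))"

definition besic_cauchy :: "(nat \<Rightarrow> nat set) \<Rightarrow> (nat \<Rightarrow> nat \<Rightarrow> complex) \<Rightarrow> bool" where
  "besic_cauchy \<Phi> F \<longleftrightarrow> (\<forall>\<epsilon>>0. \<exists>N. \<forall>j\<ge>N. \<forall>k\<ge>N. besic_norm \<Phi> (\<lambda>n. F k n - F j n) \<le> \<epsilon>)"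

end

theory Submission
  imports Defs
begin

text \<open>Choose the subsequence greedily: \<open>\<Phi> (\<sigma> (k+1))\<close> is taken so large that the finite union
  \<open>W k\<close> of all earlier sets \<open>\<Phi> 0, \<dots>, \<Phi> (\<sigma> k)\<close> carries negligible weight in it, and that its
  averages of \<open>|F (k+1) - F i|\<^sup>2\<close>, \<open>i \<le> k+1\<close>, are within \<open>1/(k+2)\<close> of their limsups.
  Let \<open>f\<close> agree with \<open>F (k+1)\<close> on \<open>W (k+1) - W k\<close>. On \<open>\<Phi> (\<sigma> K)\<close> the function \<open>f - F j\<close> then
  coincides with \<open>F K - F j\<close> up to a set of negligible weight, so the norm of \<open>f - F j\<close> along
  \<open>\<Phi> \<circ> \<sigma>\<close> is at most \<open>limsup\<^sub>K \<parallel>F K - F j\<parallel>\<^sub>\<Phi>\<close>, which is small for large \<open>j\<close> by the Cauchy property.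
  As \<open>f\<close> only takes values of the \<open>F j\<close>, it stays in any interval containing all of them.\<close>

definition besic_avg :: "(nat \<Rightarrow> nat set) \<Rightarrow> (nat \<Rightarrow> complex) \<Rightarrow> nat \<Rightarrow> real" where
  "besic_avg \<Psi> g N = (\<Sum>n\<in>\<Psi> N. (cmod (g n))\<^sup>2) / real (card (\<Psi> N))"

lemma besic_sq_eq_limsup_avg: "besic_sq \<Psi> g = limsup (\<lambda>N. ereal (besic_avg \<Psi> g N))"
  by (simp add: besic_sq_def besic_avg_def)

lemma besic_avg_nonneg: "0 \<le> besic_avg \<Psi> g N"
  by (simp add: besic_avg_def sum_nonneg)

lemma besic_sq_nonneg: "0 \<le> besic_sq \<Psi> g"
  unfolding besic_sq_eq_limsup_avg by (rule le_Limsup) (auto simp: besic_avg_nonneg)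

lemma besic_sq_le_if_eventually_avg_le:
  assumes "eventually (\<lambda>N. besic_avg \<Psi> g N \<le> C + e N) sequentially" and "e \<longlonglongrightarrow> 0"
  shows "besic_sq \<Psi> g \<le> ereal C"
proof -
  have "(\<lambda>N. ereal (C + e N)) \<longlonglongrightarrow> ereal (C + 0)"
    by (intro tendsto_intros assms(2))
  then have "limsup (\<lambda>N. ereal (C + e N)) = ereal C"
    by (simp add: lim_imp_Limsup)
  moreover have "besic_sq \<Psi> g \<le> limsup (\<lambda>N. ereal (C + e N))"
    unfolding besic_sq_eq_limsup_avg by (rule Limsup_mono) (use assms(1) in \<open>auto elim: eventually_mono\<close>)
  ultimately show ?thesis by simp
qed

lemma L2_if_eventually_avg_le:
  assumes "eventually (\<lambda>N. besic_avg \<Psi> g N \<le> C) sequentially"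
  shows "g \<in> L2 \<Psi>"
  using besic_sq_le_if_eventually_avg_le[of \<Psi> g C "\<lambda>_. 0"] assms
  by (auto simp: L2_def intro: le_less_trans)

lemma besic_norm_sq:
  assumes "g \<in> L2 \<Psi>"
  shows "ereal ((besic_norm \<Psi> g)\<^sup>2) = besic_sq \<Psi> g"
  using assms besic_sq_nonneg[of \<Psi> g]
  by (cases "besic_sq \<Psi> g") (auto simp: L2_def besic_norm_def)

lemma besic_norm_nonneg: "0 \<le> besic_norm \<Psi> g"
  unfolding besic_norm_def using besic_sq_nonneg[of \<Psi> g] by (simp add: real_of_ereal_pos)

lemma besic_norm_le:
  assumes "besic_sq \<Psi> g \<le> ereal (C\<^sup>2)" and "0 \<le> C"
  shows "besic_norm \<Psi> g \<le> C"
proof -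
  have "real_of_ereal (besic_sq \<Psi> g) \<le> C\<^sup>2"
    using assms(1) besic_sq_nonneg[of \<Psi> g] by (cases "besic_sq \<Psi> g") auto
  then show ?thesis
    unfolding besic_norm_def using assms(2) real_sqrt_le_mono by fastforce
qed

lemma eventually_besic_avg_le:
  assumes "g \<in> L2 \<Psi>" and "0 < \<delta>"
  shows "eventually (\<lambda>N. besic_avg \<Psi> g N \<le> (besic_norm \<Psi> g)\<^sup>2 + \<delta>) sequentially"
proof -
  have "limsup (\<lambda>N. ereal (besic_avg \<Psi> g N)) < ereal ((besic_norm \<Psi> g)\<^sup>2 + \<delta>)"
    using assms(2) by (simp flip: besic_sq_eq_limsup_avg besic_norm_sq[OF assms(1)])
  from Limsup_lessD[OF this] show ?thesis by (auto elim: eventually_mono)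
qed

lemma besic_avg_add_le:
  "besic_avg \<Psi> (\<lambda>n. g n + h n) N \<le> 2 * besic_avg \<Psi> g N + 2 * besic_avg \<Psi> h N"
proof -
  have "(cmod (g n + h n))\<^sup>2 \<le> 2 * (cmod (g n))\<^sup>2 + 2 * (cmod (h n))\<^sup>2" for n
  proof -
    have "(cmod (g n + h n))\<^sup>2 \<le> (cmod (g n) + cmod (h n))\<^sup>2"
      by (simp add: power_mono norm_triangle_ineq)
    also have "\<dots> \<le> 2 * (cmod (g n))\<^sup>2 + 2 * (cmod (h n))\<^sup>2"
      using sum_squares_ge_zero[of "cmod (g n) - cmod (h n)" 0] by (simp add: power2_eq_square algebra_simps)
    finally show ?thesis .
  qed
  then have "(\<Sum>n\<in>\<Psi> N. (cmod (g n + h n))\<^sup>2)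
      \<le> 2 * (\<Sum>n\<in>\<Psi> N. (cmod (g n))\<^sup>2) + 2 * (\<Sum>n\<in>\<Psi> N. (cmod (h n))\<^sup>2)"
    by (simp add: sum_distrib_left flip: sum.distrib) (rule sum_mono)
  then show ?thesis
    unfolding besic_avg_def by (simp add: divide_right_mono flip: add_divide_distrib)
qed

lemma L2_add:
  assumes "g \<in> L2 \<Psi>" and "h \<in> L2 \<Psi>"
  shows "(\<lambda>n. g n + h n) \<in> L2 \<Psi>"
proof -
  have "eventually (\<lambda>N. besic_avg \<Psi> (\<lambda>n. g n + h n) N
          \<le> 2 * (besic_norm \<Psi> g)\<^sup>2 + 2 * (besic_norm \<Psi> h)\<^sup>2 + 4) sequentially"
    using eventually_besic_avg_le[OF assms(1) zero_less_one] eventually_besic_avg_le[OF assms(2) zero_less_one]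
  proof eventually_elim
    case (elim N)
    then show ?case using besic_avg_add_le[of \<Psi> g h N] by linarith
  qed
  then show ?thesis by (rule L2_if_eventually_avg_le)
qed

lemma L2_uminus: "g \<in> L2 \<Psi> \<Longrightarrow> (\<lambda>n. - g n) \<in> L2 \<Psi>"
  by (simp add: L2_def besic_sq_def)

lemma L2_diff: "g \<in> L2 \<Psi> \<Longrightarrow> h \<in> L2 \<Psi> \<Longrightarrow> (\<lambda>n. g n - h n) \<in> L2 \<Psi>"
  using L2_add[of g \<Psi> "\<lambda>n. - h n"] L2_uminus[of h \<Psi>] by simp

lemma L2_subseq:
  assumes "g \<in> L2 \<Psi>" and "strict_mono \<sigma>"
  shows "g \<in> L2 (\<Psi> \<circ> \<sigma>)"
  using limsup_subseq_mono[OF assms(2), of "\<lambda>N. ereal (besic_avg \<Psi> g N)"] assms(1)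
  by (auto simp: L2_def besic_sq_eq_limsup_avg besic_avg_def o_def)

lemma folner_inverse_card_tendsto_zero:
  assumes "folner \<Phi>"
  shows "(\<lambda>N. 1 / real (card (\<Phi> N))) \<longlonglongrightarrow> 0"
proof (rule tendsto_sandwich[OF _ _ tendsto_const])
  let ?D = "\<lambda>N. (((\<lambda>n. n + 1) ` \<Phi> N) - \<Phi> N) \<union> (\<Phi> N - ((\<lambda>n. n + 1) ` \<Phi> N))"
  show "(\<lambda>N. real (card (?D N)) / real (card (\<Phi> N))) \<longlonglongrightarrow> 0"
    using assms unfolding folner_def by blast
  show "eventually (\<lambda>N. 1 / real (card (\<Phi> N)) \<le> real (card (?D N)) / real (card (\<Phi> N))) sequentially"
  proof (intro always_eventually allI)
    fix N
    have fin: "finite (\<Phi> N)" and ne: "\<Phi> N \<noteq> {}" using assms unfolding folner_def by auto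
    have "Max (\<Phi> N) + 1 \<in> ?D N"
      using Max_in[OF fin ne] Max_ge[OF fin, of "Max (\<Phi> N) + 1"] by auto
    then have "1 \<le> card (?D N)"
      using fin by (metis One_nat_def Suc_leI card_gt_0_iff empty_iff finite_Diff finite_UnI finite_imageI)
    then show "1 / real (card (\<Phi> N)) \<le> real (card (?D N)) / real (card (\<Phi> N))"
      by (simp add: divide_right_mono)
  qed
qed (simp add: eventually_sequentially)

lemma strict_mono_chain_exists:
  fixes P :: "nat \<Rightarrow> nat \<Rightarrow> nat \<Rightarrow> bool"
  assumes "\<And>k p. eventually (P k p) sequentially"
  obtains \<sigma> :: "nat \<Rightarrow> nat" where "strict_mono \<sigma>" and "\<And>k. P (Suc k) (\<sigma> k) (\<sigma> (Suc k))"
proof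
  have ex: "\<exists>N. p < N \<and> P (Suc k) p N" for k p
    using eventually_conj[OF eventually_gt_at_top assms] eventually_sequentially by force
  define \<sigma> where "\<sigma> = rec_nat 0 (\<lambda>k p. SOME N. p < N \<and> P (Suc k) p N)"
  have \<sigma>: "\<sigma> k < \<sigma> (Suc k) \<and> P (Suc k) (\<sigma> k) (\<sigma> (Suc k))" for k
    using someI_ex[OF ex[of "\<sigma> k" k]] by (simp add: \<sigma>_def)
  then show "strict_mono \<sigma>" and "\<And>k. P (Suc k) (\<sigma> k) (\<sigma> (Suc k))"
    by (auto simp: strict_mono_Suc_iff)
qed

text \<open>When \<open>x\<close> lies in no layer, \<open>LEAST\<close> returns an unspecified index, so \<open>glue_layers W F x\<close>
  is still a value of some \<open>F k\<close>.\<close>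

definition glue_layers :: "(nat \<Rightarrow> 'a set) \<Rightarrow> (nat \<Rightarrow> 'a \<Rightarrow> 'b) \<Rightarrow> 'a \<Rightarrow> 'b" where
  "glue_layers W F x = F (LEAST k. x \<in> W k) x"

lemma glue_layers_mem_le: "x \<in> W k \<Longrightarrow> \<exists>l\<le>k. glue_layers W F x = F l x"
  unfolding glue_layers_def by (intro exI[of _ "LEAST j. x \<in> W j"]) (simp add: Least_le)

lemma glue_layers_new_layer:
  assumes "mono W" and "x \<in> W (Suc k)" and "x \<notin> W k"
  shows "glue_layers W F x = F (Suc k) x"
proof -
  have "(LEAST j. x \<in> W j) = Suc k"
  proof (rule Least_equality)
    show "Suc k \<le> j" if "x \<in> W j" for j
    proof (rule ccontr)
      assume "\<not> Suc k \<le> j"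
      then have "W j \<subseteq> W k" using assms(1) by (simp add: monoD)
      then show False using that assms(3) by blast
    qed
  qed (fact assms(2))
  then show ?thesis by (simp add: glue_layers_def)
qed

text \<open>Bounds \<open>|F l n - F i n|\<^sup>2\<close> for every \<open>l, i \<le> K\<close>, hence controls the points glued from an
  earlier layer without knowing which one.\<close>

definition pairwise_energy :: "(nat \<Rightarrow> nat \<Rightarrow> complex) \<Rightarrow> nat \<Rightarrow> nat set \<Rightarrow> real" where
  "pairwise_energy F K A = (\<Sum>n\<in>A. \<Sum>l\<le>K. \<Sum>i\<le>K. (cmod (F l n - F i n))\<^sup>2)"

lemma sq_dist_le_pairwise:
  fixes F :: "nat \<Rightarrow> nat \<Rightarrow> complex"
  assumes "l \<le> K" and "i \<le> K"
  shows "(cmod (F l n - F i n))\<^sup>2 \<le> (\<Sum>l'\<le>K. \<Sum>i'\<le>K. (cmod (F l' n - F i' n))\<^sup>2)"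
proof -
  have "(cmod (F l n - F i n))\<^sup>2 \<le> (\<Sum>i'\<le>K. (cmod (F l n - F i' n))\<^sup>2)"
    using member_le_sum[of i "{..K}" "\<lambda>i'. (cmod (F l n - F i' n))\<^sup>2"] assms(2) by simp
  also have "\<dots> \<le> (\<Sum>l'\<le>K. \<Sum>i'\<le>K. (cmod (F l' n - F i' n))\<^sup>2)"
    using member_le_sum[of l "{..K}" "\<lambda>l'. \<Sum>i'\<le>K. (cmod (F l' n - F i' n))\<^sup>2"] assms(1)
    by (simp add: sum_nonneg)
  finally show ?thesis .
qed

lemma sum_sq_glue_layers_le:
  fixes F :: "nat \<Rightarrow> nat \<Rightarrow> complex"
  assumes "finite S" and "finite (W k)" and "mono W" and "S \<subseteq> W (Suc k)" and "i \<le> Suc k"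
  shows "(\<Sum>n\<in>S. (cmod (glue_layers W F n - F i n))\<^sup>2)
    \<le> pairwise_energy F (Suc k) (W k) + (\<Sum>n\<in>S. (cmod (F (Suc k) n - F i n))\<^sup>2)"
    (is "sum ?g S \<le> _ + sum ?h S")
proof -
  have "sum ?g (S \<inter> W k) \<le> (\<Sum>n\<in>S \<inter> W k. \<Sum>l\<le>Suc k. \<Sum>i'\<le>Suc k. (cmod (F l n - F i' n))\<^sup>2)"
  proof (rule sum_mono)
    fix n assume "n \<in> S \<inter> W k"
    then obtain l where "l \<le> k" and "glue_layers W F n = F l n"
      using glue_layers_mem_le[of n W k F] by blast
    then show "?g n \<le> (\<Sum>l\<le>Suc k. \<Sum>i'\<le>Suc k. (cmod (F l n - F i' n))\<^sup>2)"
      using sq_dist_le_pairwise[of l "Suc k" i F n] assms(5) by simp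
  qed
  also have "\<dots> \<le> pairwise_energy F (Suc k) (W k)"
    unfolding pairwise_energy_def by (rule sum_mono2[OF assms(2)]) (simp_all add: sum_nonneg)
  finally have old: "sum ?g (S \<inter> W k) \<le> pairwise_energy F (Suc k) (W k)" .
  have "sum ?g (S - W k) = sum ?h (S - W k)"
    using assms(3,4) glue_layers_new_layer[of W _ k F] by (intro sum.cong) auto
  also have "\<dots> \<le> sum ?h S"
    by (rule sum_mono2[OF assms(1)]) auto
  finally have new: "sum ?g (S - W k) \<le> sum ?h S" .
  show ?thesis
    using old new sum.Int_Diff[OF assms(1), of ?g "W k"] by linarith
qed

lemma besic_avg_glue_layers_le:
  fixes F :: "nat \<Rightarrow> nat \<Rightarrow> complex"
  assumes "\<And>N. finite (\<Phi> N)" and "mono \<sigma>" and "i \<le> Suc k"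
  shows "besic_avg (\<Phi> \<circ> \<sigma>) (\<lambda>n. glue_layers (\<lambda>k. \<Union>N\<le>\<sigma> k. \<Phi> N) F n - F i n) (Suc k)
    \<le> pairwise_energy F (Suc k) (\<Union>N\<le>\<sigma> k. \<Phi> N) / real (card (\<Phi> (\<sigma> (Suc k))))
       + besic_avg \<Phi> (\<lambda>n. F (Suc k) n - F i n) (\<sigma> (Suc k))"
proof -
  have "mono (\<lambda>k. \<Union>N\<le>\<sigma> k. \<Phi> N)"
  proof (rule monoI)
    fix j k :: nat assume "j \<le> k"
    then have "\<sigma> j \<le> \<sigma> k" using assms(2) by (simp add: monoD)
    then show "(\<Union>N\<le>\<sigma> j. \<Phi> N) \<subseteq> (\<Union>N\<le>\<sigma> k. \<Phi> N)" by (intro UN_mono) auto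
  qed
  then have "(\<Sum>n\<in>\<Phi> (\<sigma> (Suc k)). (cmod (glue_layers (\<lambda>k. \<Union>N\<le>\<sigma> k. \<Phi> N) F n - F i n))\<^sup>2)
      \<le> pairwise_energy F (Suc k) (\<Union>N\<le>\<sigma> k. \<Phi> N) + (\<Sum>n\<in>\<Phi> (\<sigma> (Suc k)). (cmod (F (Suc k) n - F i n))\<^sup>2)"
    using assms(1,3) by (intro sum_sq_glue_layers_le) (auto simp del: UN_iff)
  then show ?thesis
    unfolding besic_avg_def o_def by (simp add: divide_right_mono flip: add_divide_distrib)
qed

definition glue_admissible ::
    "(nat \<Rightarrow> nat set) \<Rightarrow> (nat \<Rightarrow> nat \<Rightarrow> complex) \<Rightarrow> nat \<Rightarrow> nat \<Rightarrow> nat \<Rightarrow> bool" where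
  "glue_admissible \<Phi> F k p N \<longleftrightarrow>
     pairwise_energy F k (\<Union>N'\<le>p. \<Phi> N') / real (card (\<Phi> N)) \<le> 1 / real (Suc k) \<and>
     (\<forall>i\<le>k. besic_avg \<Phi> (\<lambda>n. F k n - F i n) N
        \<le> (besic_norm \<Phi> (\<lambda>n. F k n - F i n))\<^sup>2 + 1 / real (Suc k))"

lemma eventually_glue_admissible:
  assumes "(\<lambda>N. 1 / real (card (\<Phi> N))) \<longlonglongrightarrow> 0" and "\<And>j. F j \<in> L2 \<Phi>"
  shows "eventually (glue_admissible \<Phi> F k p) sequentially"
  unfolding glue_admissible_def
proof (rule eventually_conj)
  let ?E = "pairwise_energy F k (\<Union>N'\<le>p. \<Phi> N')"
  have "(\<lambda>N. ?E * (1 / real (card (\<Phi> N)))) \<longlonglongrightarrow> ?E * 0"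
    by (intro tendsto_mult tendsto_const assms(1))
  from order_tendstoD(2)[OF this, of "1 / real (Suc k)"]
  show "eventually (\<lambda>N. ?E / real (card (\<Phi> N)) \<le> 1 / real (Suc k)) sequentially"
    by (auto elim: eventually_mono)
  have "eventually (\<lambda>N. \<forall>i\<in>{..k}. besic_avg \<Phi> (\<lambda>n. F k n - F i n) N
       \<le> (besic_norm \<Phi> (\<lambda>n. F k n - F i n))\<^sup>2 + 1 / real (Suc k)) sequentially"
    using assms(2) by (intro eventually_ball_finite ballI eventually_besic_avg_le L2_diff) auto
  then show "eventually (\<lambda>N. \<forall>i\<le>k. besic_avg \<Phi> (\<lambda>n. F k n - F i n) N
       \<le> (besic_norm \<Phi> (\<lambda>n. F k n - F i n))\<^sup>2 + 1 / real (Suc k)) sequentially"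
    by (auto elim!: eventually_mono)
qed

lemma eventually_besic_avg_glue_layers_le:
  assumes "\<And>N. finite (\<Phi> N)" and "strict_mono \<sigma>"
    and "\<And>k. glue_admissible \<Phi> F (Suc k) (\<sigma> k) (\<sigma> (Suc k))"
  shows "eventually (\<lambda>K. besic_avg (\<Phi> \<circ> \<sigma>) (\<lambda>n. glue_layers (\<lambda>k. \<Union>N\<le>\<sigma> k. \<Phi> N) F n - F j n) K
    \<le> (besic_norm \<Phi> (\<lambda>n. F K n - F j n))\<^sup>2 + 2 / real (Suc K)) sequentially"
  unfolding eventually_sequentially
proof (intro exI allI impI)
  fix K assume "Suc j \<le> K"
  then obtain k where K: "K = Suc k" and j: "j \<le> Suc k" by (cases K) auto
  have "besic_avg (\<Phi> \<circ> \<sigma>) (\<lambda>n. glue_layers (\<lambda>k. \<Union>N\<le>\<sigma> k. \<Phi> N) F n - F j n) (Suc k)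
      \<le> pairwise_energy F (Suc k) (\<Union>N\<le>\<sigma> k. \<Phi> N) / real (card (\<Phi> (\<sigma> (Suc k))))
         + besic_avg \<Phi> (\<lambda>n. F (Suc k) n - F j n) (\<sigma> (Suc k))"
    using assms(1) strict_mono_mono[OF assms(2)] j by (rule besic_avg_glue_layers_le)
  also have "\<dots> \<le> 1 / real (Suc (Suc k))
      + ((besic_norm \<Phi> (\<lambda>n. F (Suc k) n - F j n))\<^sup>2 + 1 / real (Suc (Suc k)))"
    using assms(3)[of k] j unfolding glue_admissible_def by (intro add_mono) auto
  finally show "besic_avg (\<Phi> \<circ> \<sigma>) (\<lambda>n. glue_layers (\<lambda>k. \<Union>N\<le>\<sigma> k. \<Phi> N) F n - F j n) K
      \<le> (besic_norm \<Phi> (\<lambda>n. F K n - F j n))\<^sup>2 + 2 / real (Suc K)"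
    unfolding K by (simp add: field_simps)
qed

lemma besic_limit_if_avg_le:
  assumes "besic_cauchy \<Phi> F" and "e \<longlonglongrightarrow> 0"
    and "\<And>j. eventually (\<lambda>K. besic_avg \<Psi> (\<lambda>n. f n - F j n) K
       \<le> (besic_norm \<Phi> (\<lambda>n. F K n - F j n))\<^sup>2 + e K) sequentially"
  shows "(\<lambda>j. besic_norm \<Psi> (\<lambda>n. f n - F j n)) \<longlonglongrightarrow> 0"
    and "\<exists>j. (\<lambda>n. f n - F j n) \<in> L2 \<Psi>"
proof -
  have small: "\<exists>M. \<forall>j\<ge>M. besic_sq \<Psi> (\<lambda>n. f n - F j n) \<le> ereal (\<epsilon>\<^sup>2)" if "0 < \<epsilon>" for \<epsilon>
  proof -
    obtain M where M: "\<And>j k. j \<ge> M \<Longrightarrow> k \<ge> M \<Longrightarrow> besic_norm \<Phi> (\<lambda>n. F k n - F j n) \<le> \<epsilon>"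
      using assms(1) \<open>0 < \<epsilon>\<close> unfolding besic_cauchy_def by blast
    have "besic_sq \<Psi> (\<lambda>n. f n - F j n) \<le> ereal (\<epsilon>\<^sup>2)" if "j \<ge> M" for j
    proof (rule besic_sq_le_if_eventually_avg_le[OF _ assms(2)])
      show "eventually (\<lambda>K. besic_avg \<Psi> (\<lambda>n. f n - F j n) K \<le> \<epsilon>\<^sup>2 + e K) sequentially"
        using assms(3)[of j] eventually_ge_at_top[of M]
      proof eventually_elim
        case (elim K)
        have "(besic_norm \<Phi> (\<lambda>n. F K n - F j n))\<^sup>2 \<le> \<epsilon>\<^sup>2"
          using M[of j K] \<open>j \<ge> M\<close> elim(2) besic_norm_nonneg by (simp add: power_mono)
        then show ?case using elim(1) by linarith
      qed
    qed
    then show ?thesis by blast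
  qed
  show "(\<lambda>j. besic_norm \<Psi> (\<lambda>n. f n - F j n)) \<longlonglongrightarrow> 0"
  proof (rule LIMSEQ_I)
    fix r :: real assume "0 < r"
    then obtain M where "\<And>j. j \<ge> M \<Longrightarrow> besic_sq \<Psi> (\<lambda>n. f n - F j n) \<le> ereal ((r / 2)\<^sup>2)"
      using small[of "r / 2"] by auto
    then have "norm (besic_norm \<Psi> (\<lambda>n. f n - F j n)) < r" if "j \<ge> M" for j
      using besic_norm_le[of \<Psi> "\<lambda>n. f n - F j n" "r / 2"] besic_norm_nonneg \<open>0 < r\<close> that
      by fastforce
    then show "\<exists>M. \<forall>j\<ge>M. norm (besic_norm \<Psi> (\<lambda>n. f n - F j n) - 0) < r" by auto
  qed
  obtain M where "besic_sq \<Psi> (\<lambda>n. f n - F M n) \<le> ereal 1"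
    using small[of 1] by auto
  then have "(\<lambda>n. f n - F M n) \<in> L2 \<Psi>"
    unfolding L2_def using le_less_trans by fastforce
  then show "\<exists>j. (\<lambda>n. f n - F j n) \<in> L2 \<Psi>" ..
qed

theorem proposition3p1:
  fixes \<Phi> :: "nat \<Rightarrow> nat set" and F :: "nat \<Rightarrow> nat \<Rightarrow> complex"
  assumes "folner \<Phi>"
    and "\<And>j. F j \<in> L2 \<Phi>"
    and "besic_cauchy \<Phi> F"
  shows "\<exists>\<sigma> :: nat \<Rightarrow> nat. \<exists>f :: nat \<Rightarrow> complex.
           strict_mono \<sigma> \<and> f \<in> L2 (\<Phi> \<circ> \<sigma>) \<and>
           (\<lambda>j. besic_norm (\<Phi> \<circ> \<sigma>) (\<lambda>n. f n - F j n)) \<longlonglongrightarrow> 0 \<and>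
           (\<forall>a b :: real. (\<forall>j n. F j n \<in> complex_of_real ` {a..b}) \<longrightarrow>
                (\<forall>n. f n \<in> complex_of_real ` {a..b}))"
proof -
  have "eventually (glue_admissible \<Phi> F k p) sequentially" for k p
    using folner_inverse_card_tendsto_zero[OF assms(1)] assms(2) by (rule eventually_glue_admissible)
  then obtain \<sigma> where \<sigma>: "strict_mono \<sigma>" and admissible: "\<And>k. glue_admissible \<Phi> F (Suc k) (\<sigma> k) (\<sigma> (Suc k))"
    using strict_mono_chain_exists[of "glue_admissible \<Phi> F"] by blast
  define f where "f = glue_layers (\<lambda>k. \<Union>N\<le>\<sigma> k. \<Phi> N) F"
  have "\<And>N. finite (\<Phi> N)"
    using assms(1) by (simp add: folner_def)
  note limit = besic_limit_if_avg_le[OF assms(3) LIMSEQ_Suc[OF lim_const_over_n]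
      eventually_besic_avg_glue_layers_le[OF this \<sigma> admissible, folded f_def]]
  obtain j where "(\<lambda>n. f n - F j n) \<in> L2 (\<Phi> \<circ> \<sigma>)"
    using limit(2) by blast
  from L2_add[OF this L2_subseq[OF assms(2)[of j] \<sigma>]] have "f \<in> L2 (\<Phi> \<circ> \<sigma>)"
    by simp
  moreover have "\<forall>a b :: real. (\<forall>j n. F j n \<in> complex_of_real ` {a..b}) \<longrightarrow>
      (\<forall>n. f n \<in> complex_of_real ` {a..b})"
    unfolding f_def glue_layers_def by blast
  ultimately show ?thesis
    using \<sigma> limit(1) by blast
qed

end
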